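(* Let $1\le p<\infty$, $N\ge2$, and for $1\le i\le N$ let $T_i$ be the unilateral weighted backward shift on $\ell^p(\mathbb{N})$ with weight sequence $(w^{(i)}_m)_{m\in\mathbb{N}}$. If $T_1,\dots,T_N$ are s-hypercyclic, then the direct sum $T_1\oplus\cdots\oplus T_N$ is hypercyclic on $\oplus_{i=1}^N\ell^p(\mathbb{N})$.
   Context: $\{e_m\}$ is the canonical basis of $\ell^p(\mathbb{N})$ over $\mathbb{K}\in\{\mathbb{R},\mathbb{C}\}$. The unilateral weighted backward shift with bounded weight sequence $(w_m)$ is $Te_m=w_me_{m-1}$ for $m\ge2$, $Te_1=0$. Operators $T_1,\dots,T_N$ on $X$ are s-hypercyclic if some $x\in X$ has the closure of $\{(T_1^nx,\dots,T_N^nx):n\in\mathbb{N}\}$ containing the diagonal $\{(y,\dots,y):y\in X\}$ of $\oplus_{i=1}^NX$. An operator is hypercyclic if some vector has dense orbit. *)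

theory Defs
  imports "HOL-Analysis.Analysis"
begin

text \<open>Sequences are indexed by nat; the coordinate 0 is a dummy coordinate forced to be 0,
  so that coordinates 1,2,3,... correspond to the canonical basis e_1, e_2, ... of
  l^p(N) with N = {1,2,...}.\<close>

definition lp_space :: "real \<Rightarrow> (nat \<Rightarrow> 'a::real_normed_vector) set" where
  "lp_space p = {x. x 0 = 0 \<and> summable (\<lambda>m. norm (x m) powr p)}"

definition lp_norm :: "real \<Rightarrow> (nat \<Rightarrow> 'a::real_normed_vector) \<Rightarrow> real" where
  "lp_norm p x = (\<Sum>m. norm (x m) powr p) powr (1 / p)"

definition lp_dist :: "real \<Rightarrow> (nat \<Rightarrow> 'a::real_normed_vector) \<Rightarrow> (nat \<Rightarrow> 'a) \<Rightarrow> real" where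
  "lp_dist p x y = lp_norm p (\<lambda>m. x m - y m)"

text \<open>Unilateral weighted backward shift: T e_m = w_m e_(m-1) for m \<ge> 2, T e_1 = 0.\<close>
definition wshift :: "(nat \<Rightarrow> 'a::real_normed_field) \<Rightarrow> (nat \<Rightarrow> 'a) \<Rightarrow> (nat \<Rightarrow> 'a)" where
  "wshift w x = (\<lambda>m. if m = 0 then 0 else w (m + 1) * x (m + 1))"

definition lp_hypercyclic :: "real \<Rightarrow> ((nat \<Rightarrow> 'a::real_normed_vector) \<Rightarrow> (nat \<Rightarrow> 'a)) \<Rightarrow> bool" where
  "lp_hypercyclic p T \<longleftrightarrow>
     (\<exists>x\<in>lp_space p. \<forall>y\<in>lp_space p. \<forall>\<epsilon>>0. \<exists>n. lp_dist p ((T ^^ n) x) y < \<epsilon>)"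

text \<open>Operators T_i (i in I, I finite) on l^p are s-hypercyclic: some x has the closure of
  {(T_i^n x)_i : n} containing the diagonal of the direct sum (product topology).\<close>
definition lp_s_hypercyclic ::
  "real \<Rightarrow> nat set \<Rightarrow> (nat \<Rightarrow> (nat \<Rightarrow> 'a::real_normed_vector) \<Rightarrow> (nat \<Rightarrow> 'a)) \<Rightarrow> bool" where
  "lp_s_hypercyclic p I T \<longleftrightarrow>
     (\<exists>x\<in>lp_space p. \<forall>y\<in>lp_space p. \<forall>\<epsilon>>0. \<exists>n.
        \<forall>i\<in>I. lp_dist p ((T i ^^ n) x) y < \<epsilon>)"

text \<open>The direct sum of the T_i (i in I, I finite) is hypercyclic on the direct sum of
  copies of l^p (product topology, e.g. given by the max of the l^p distances).\<close>
definition lp_dsum_hypercyclic ::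
  "real \<Rightarrow> nat set \<Rightarrow> (nat \<Rightarrow> (nat \<Rightarrow> 'a::real_normed_vector) \<Rightarrow> (nat \<Rightarrow> 'a)) \<Rightarrow> bool" where
  "lp_dsum_hypercyclic p I T \<longleftrightarrow>
     (\<exists>x. (\<forall>i\<in>I. x i \<in> lp_space p) \<and>
        (\<forall>y. (\<forall>i\<in>I. y i \<in> lp_space p) \<longrightarrow> (\<forall>\<epsilon>>0. \<exists>n.
          \<forall>i\<in>I. lp_dist p ((T i ^^ n) (x i)) (y i) < \<epsilon>)))"

end

theory Submission
  imports Defs
begin

text \<open>
  Let \<open>R\<^sub>i(s)\<close> be the product of the weights \<open>w\<^sup>(\<^sup>i\<^sup>)\<^sub>2, ..., w\<^sup>(\<^sup>i\<^sup>)\<^sub>s\<close>. Testing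
  s-hypercyclicity against a large multiple of \<open>e\<^sub>1\<close> shows that for every \<open>C\<close> some \<open>s\<close>
  has \<open>\<bar>R\<^sub>i(s)\<bar> \<ge> C\<close> for all \<open>i\<close> at once. This simultaneous growth suffices to build a
  hypercyclic vector of the direct sum by hand: enumerate a countable dense family of finitely
  supported targets \<open>y\<^sub>K\<close> in which every target recurs with arbitrarily large index \<open>K\<close>,
  and place on pairwise disjoint coordinate blocks \<open>n\<^sub>K+1, ..., n\<^sub>K+K\<close> the vectors that
  \<open>T\<^sub>i\<close> maps back to \<open>y\<^sub>K\<close> in \<open>n\<^sub>K\<close> steps. If each block ends at an \<open>s\<close> where all
  \<open>\<bar>R\<^sub>i(s)\<bar>\<close> are huge, then after \<open>n\<^sub>K\<close> steps the later blocks contribute an error of at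
  most \<open>2\<^sup>-\<^sup>K\<close>, while the earlier blocks have been shifted out.
\<close>

section \<open>Products of weights and iterated shifts\<close>

definition weight_prod :: "(nat \<Rightarrow> 'a::real_normed_field) \<Rightarrow> nat \<Rightarrow> nat \<Rightarrow> 'a" where
  "weight_prod w a b = (\<Prod>\<nu>\<in>{a<..b}. w \<nu>)"

lemma weight_prod_split:
  assumes "a \<le> b" "b \<le> c"
  shows "weight_prod w a c = weight_prod w a b * weight_prod w b c"
proof -
  have "{a<..c} = {a<..b} \<union> {b<..c}" using assms by auto
  then show ?thesis
    unfolding weight_prod_def by (simp add: prod.union_disjoint ivl_disj_int_two(4))
qed

lemma weight_prod_self [simp]: "weight_prod w a a = 1"
  by (simp add: weight_prod_def)

lemma weight_prod_Suc: "weight_prod w a (Suc a) = w (Suc a)"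
proof -
  have "{a<..Suc a} = {Suc a}" by auto
  then show ?thesis by (simp add: weight_prod_def)
qed

lemma norm_weight_prod_le:
  assumes "\<And>\<nu>. norm (w \<nu>) \<le> W"
  shows "norm (weight_prod w a b) \<le> W ^ (b - a)"
proof -
  have "norm (weight_prod w a b) = (\<Prod>\<nu>\<in>{a<..b}. norm (w \<nu>))"
    by (simp add: weight_prod_def prod_norm)
  also have "\<dots> \<le> (\<Prod>\<nu>\<in>{a<..b}. W)"
    by (rule prod_mono) (use assms in auto)
  finally show ?thesis by simp
qed

lemma wshift_funpow:
  assumes "x 0 = 0"
  shows "(wshift w ^^ n) x = (\<lambda>j. if j = 0 then 0 else weight_prod w j (j + n) * x (j + n))"
proof (induction n)
  case 0
  show ?case using assms by auto
next
  case (Suc n)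
  have "w (Suc j) * weight_prod w (Suc j) (Suc j + n) = weight_prod w j (j + Suc n)" for j
    using weight_prod_split[of j "Suc j" "j + Suc n" w] by (simp add: weight_prod_Suc)
  then show ?case
    by (simp only: funpow.simps comp_def Suc) (auto simp: wshift_def mult.assoc[symmetric])
qed

section \<open>Estimates in \<open>\<ell>\<^sup>p\<close>\<close>

lemma norm_le_lp_norm:
  assumes "0 < p" "summable (\<lambda>m. norm (v m) powr p)"
  shows "norm (v j) \<le> lp_norm p v"
proof -
  have "norm (v j) powr p \<le> (\<Sum>m. norm (v m) powr p)"
    using sum_le_suminf[OF assms(2), of "{j}"] by simp
  then have "(norm (v j) powr p) powr (1/p) \<le> (\<Sum>m. norm (v m) powr p) powr (1/p)"
    using assms(1) by (intro powr_mono2) auto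
  then show ?thesis using assms(1) by (simp add: lp_norm_def powr_powr)
qed

lemma norm_diff_powr_le:
  fixes a b c :: "'a::real_normed_vector"
  assumes "0 < p"
  shows "norm (a - c) powr p \<le> 2 powr p * (norm (a - b) powr p + norm (b - c) powr p)"
proof -
  let ?u = "norm (a - b)" and ?v = "norm (b - c)"
  have "norm (a - c) powr p \<le> (2 * max ?u ?v) powr p"
    using assms norm_triangle_ineq[of "a - b" "b - c"] by (intro powr_mono2) auto
  also have "\<dots> = 2 powr p * max ?u ?v powr p"
    by (simp add: powr_mult)
  also have "max ?u ?v powr p \<le> ?u powr p + ?v powr p"
    by (simp add: max_def)
  finally show ?thesis by simp
qed

lemma summable_norm_diff_powr_trans:
  fixes a b c :: "nat \<Rightarrow> 'a::real_normed_vector"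
  assumes "0 < p" "summable (\<lambda>m. norm (a m - b m) powr p)" "summable (\<lambda>m. norm (b m - c m) powr p)"
  shows "summable (\<lambda>m. norm (a m - c m) powr p)"
    and "(\<Sum>m. norm (a m - c m) powr p)
           \<le> 2 powr p * ((\<Sum>m. norm (a m - b m) powr p) + (\<Sum>m. norm (b m - c m) powr p))"
proof -
  have bound: "summable (\<lambda>m. 2 powr p * (norm (a m - b m) powr p + norm (b m - c m) powr p))"
    using assms by (intro summable_mult summable_add)
  show ac: "summable (\<lambda>m. norm (a m - c m) powr p)"
    by (rule summable_comparison_test'[OF bound, of 0]) (use norm_diff_powr_le[OF assms(1)] in auto)
  have "(\<Sum>m. norm (a m - c m) powr p)
          \<le> (\<Sum>m. 2 powr p * (norm (a m - b m) powr p + norm (b m - c m) powr p))"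
    by (rule suminf_le[OF _ ac bound]) (use norm_diff_powr_le[OF assms(1)] in auto)
  also have "\<dots> = 2 powr p * ((\<Sum>m. norm (a m - b m) powr p) + (\<Sum>m. norm (b m - c m) powr p))"
    using assms by (simp add: suminf_mult[symmetric] suminf_add summable_add)
  finally show "(\<Sum>m. norm (a m - c m) powr p)
           \<le> 2 powr p * ((\<Sum>m. norm (a m - b m) powr p) + (\<Sum>m. norm (b m - c m) powr p))" .
qed

lemma lp_space_summable_diff:
  fixes x y :: "nat \<Rightarrow> 'a::real_normed_vector"
  assumes "0 < p" "x \<in> lp_space p" "y \<in> lp_space p"
  shows "summable (\<lambda>m. norm (x m - y m) powr p)"
  using summable_norm_diff_powr_trans(1)[OF assms(1), of x "\<lambda>_. 0" y] assms
  by (simp add: lp_space_def)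

definition lp_powsum_less :: "real \<Rightarrow> (nat \<Rightarrow> 'a::real_normed_vector) \<Rightarrow> (nat \<Rightarrow> 'a) \<Rightarrow> real \<Rightarrow> bool"
  where "lp_powsum_less p u v \<eta> \<longleftrightarrow>
    summable (\<lambda>m. norm (u m - v m) powr p) \<and> (\<Sum>m. norm (u m - v m) powr p) < \<eta>"

lemma lp_dist_less_if_lp_powsum_less:
  fixes a b c :: "nat \<Rightarrow> 'a::real_normed_vector"
  assumes "0 < p" "0 < \<epsilon>"
    and "lp_powsum_less p a b (\<epsilon> powr p / 2 powr (p + 1))"
    and "lp_powsum_less p b c (\<epsilon> powr p / 2 powr (p + 1))"
  shows "lp_dist p a c < \<epsilon>"
proof -
  have ab: "summable (\<lambda>m. norm (a m - b m) powr p)"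
      "(\<Sum>m. norm (a m - b m) powr p) < \<epsilon> powr p / 2 powr (p + 1)"
    and bc: "summable (\<lambda>m. norm (b m - c m) powr p)"
      "(\<Sum>m. norm (b m - c m) powr p) < \<epsilon> powr p / 2 powr (p + 1)"
    using assms(3,4) unfolding lp_powsum_less_def by auto
  let ?S = "\<Sum>m. norm (a m - c m) powr p"
  have "?S \<le> 2 powr p * ((\<Sum>m. norm (a m - b m) powr p) + (\<Sum>m. norm (b m - c m) powr p))"
    by (rule summable_norm_diff_powr_trans(2)[OF assms(1) ab(1) bc(1)])
  also have "\<dots> < 2 powr p * (2 * (\<epsilon> powr p / 2 powr (p + 1)))"
    using ab(2) bc(2) by (intro mult_strict_left_mono) auto
  also have "\<dots> = \<epsilon> powr p"
    by (simp add: powr_add)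
  finally have "?S < \<epsilon> powr p" .
  moreover have "0 \<le> ?S"
    using summable_norm_diff_powr_trans(1)[OF assms(1) ab(1) bc(1)] by (intro suminf_nonneg) auto
  ultimately have "?S powr (1/p) < (\<epsilon> powr p) powr (1/p)"
    using assms(1) by (intro powr_less_mono2) auto
  then show ?thesis
    using assms(1,2) by (simp add: lp_dist_def lp_norm_def powr_powr)
qed

lemma wshift_funpow_in_lp_space:
  fixes x :: "nat \<Rightarrow> 'a::real_normed_field"
  assumes "0 < p" "\<And>\<nu>. norm (w \<nu>) \<le> W" "x \<in> lp_space p"
  shows "(wshift w ^^ n) x \<in> lp_space p"
proof -
  have x0: "x 0 = 0" and x: "summable (\<lambda>m. norm (x m) powr p)"
    using assms(3) by (auto simp: lp_space_def)
  have "0 \<le> W" using assms(2) norm_ge_zero order_trans by blast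
  have le: "norm ((wshift w ^^ n) x j) powr p \<le> (W ^ n) powr p * norm (x (j + n)) powr p" for j
  proof -
    have "norm ((wshift w ^^ n) x j) \<le> W ^ n * norm (x (j + n))"
      using norm_weight_prod_le[of w W j "j + n", OF assms(2)] \<open>0 \<le> W\<close>
      by (auto simp: wshift_funpow[where x = x, OF x0] norm_mult intro: mult_right_mono)
    then show ?thesis
      using \<open>0 \<le> W\<close> assms(1) by (subst powr_mult[symmetric]) (auto intro: powr_mono2)
  qed
  have "summable (\<lambda>j. (W ^ n) powr p * norm (x (j + n)) powr p)"
    using x by (intro summable_mult) (simp add: summable_iff_shift[of "\<lambda>m. norm (x m) powr p" n])
  then have "summable (\<lambda>j. norm ((wshift w ^^ n) x j) powr p)"
    by (rule summable_comparison_test'[where N = 0]) (use le in auto)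
  then show ?thesis
    by (simp add: lp_space_def wshift_funpow[where x = x, OF x0])
qed

section \<open>Growth of the weight products\<close>

text \<open>If \<open>T\<^sub>i\<^sup>n x\<close> is close to \<open>c e\<^sub>1\<close>, its first entry \<open>w\<^sub>2 \<cdots> w\<^sub>n\<^sub>+\<^sub>1 x\<^sub>n\<^sub>+\<^sub>1\<close> is close to \<open>c\<close>,
  while \<open>\<bar>x\<^sub>n\<^sub>+\<^sub>1\<bar>\<close> is at most the norm of \<open>x\<close>.\<close>
lemma s_hypercyclic_weight_prod_unbounded:
  fixes w :: "nat \<Rightarrow> nat \<Rightarrow> 'a::real_normed_field"
  assumes p: "0 < p" and weights_bounded: "\<And>i \<nu>. i \<in> I \<Longrightarrow> norm (w i \<nu>) \<le> W"
    and hyp: "lp_s_hypercyclic p I (\<lambda>i. wshift (w i))"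
  shows "\<exists>s. \<forall>i\<in>I. C \<le> norm (weight_prod (w i) 1 s)"
proof -
  obtain x where x: "x \<in> lp_space p"
    and orbit: "\<And>y \<epsilon>. y \<in> lp_space p \<Longrightarrow> 0 < \<epsilon> \<Longrightarrow>
                  \<exists>n. \<forall>i\<in>I. lp_dist p ((wshift (w i) ^^ n) x) y < \<epsilon>"
    using hyp unfolding lp_s_hypercyclic_def by blast
  have x0: "x 0 = 0" and x_summable: "summable (\<lambda>m. norm (x m) powr p)"
    using x by (auto simp: lp_space_def)
  define B where "B = lp_norm p x + 1"
  have "0 < B" by (simp add: B_def lp_norm_def add_nonneg_pos)
  define c where "c = max C 0 * B + 1"
  define y :: "nat \<Rightarrow> 'a" where "y m = (if m = 1 then of_real c else 0)" for m
  have "summable (\<lambda>m. norm (y m) powr p)"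
    by (simp add: y_def if_distrib[of "\<lambda>t. norm t powr p"] cong: if_cong)
  then have y: "y \<in> lp_space p" by (simp add: lp_space_def y_def)
  obtain n where n: "\<And>i. i \<in> I \<Longrightarrow> lp_dist p ((wshift (w i) ^^ n) x) y < 1"
    using orbit[OF y, of 1] by auto
  have "C \<le> norm (weight_prod (w i) 1 (Suc n))" if i: "i \<in> I" for i
  proof (rule ccontr)
    assume "\<not> ?thesis"
    then have small: "norm (weight_prod (w i) 1 (Suc n)) \<le> max C 0" by simp
    let ?v = "\<lambda>m. (wshift (w i) ^^ n) x m - y m"
    have "norm (?v 1) \<le> lp_norm p ?v"
      using wshift_funpow_in_lp_space[OF p weights_bounded[OF i] x] y
      by (intro norm_le_lp_norm[OF p] lp_space_summable_diff[OF p])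
    also have "\<dots> < 1" using n[OF i] by (simp add: lp_dist_def)
    finally have "norm (weight_prod (w i) 1 (Suc n) * x (Suc n) - of_real c) < 1"
      by (simp add: wshift_funpow[where x = x, OF x0] y_def)
    moreover have "norm (of_real c :: 'a) = c"
      using \<open>0 < B\<close> unfolding norm_of_real c_def by (simp add: add_nonneg_pos)
    ultimately have "c - 1 < norm (weight_prod (w i) 1 (Suc n)) * norm (x (Suc n))"
      using norm_triangle_ineq2[of "of_real c :: 'a" "weight_prod (w i) 1 (Suc n) * x (Suc n)"]
      by (simp add: norm_minus_commute norm_mult)
    also have "\<dots> \<le> max C 0 * (B - 1)"
      using small norm_le_lp_norm[OF p x_summable, of "Suc n"]
      by (intro mult_mono) (auto simp: B_def)
    finally show False by (simp add: c_def algebra_simps)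
  qed
  then show ?thesis by blast
qed

lemma s_hypercyclic_weight_prod_frequently_large:
  fixes w :: "nat \<Rightarrow> nat \<Rightarrow> 'a::real_normed_field"
  assumes "0 < p" "1 \<le> W" and weights_bounded: "\<And>i \<nu>. i \<in> I \<Longrightarrow> norm (w i \<nu>) \<le> W"
    and "lp_s_hypercyclic p I (\<lambda>i. wshift (w i))"
  shows "\<exists>s\<ge>m. \<forall>i\<in>I. C \<le> norm (weight_prod (w i) 1 s)"
proof (cases "I = {}")
  case False
  then obtain i where i: "i \<in> I" by blast
  obtain s where s: "\<forall>i\<in>I. max C (W ^ m + 1) \<le> norm (weight_prod (w i) 1 s)"
    using s_hypercyclic_weight_prod_unbounded[OF assms(1) weights_bounded assms(4)] by blast
  have "W ^ m < W ^ (s - 1)"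
    using s i norm_weight_prod_le[of "w i" W 1 s] weights_bounded[OF i] by fastforce
  then have "m \<le> s"
    using \<open>1 \<le> W\<close> power_increasing[of s m W] power_increasing[of "s - 1" s W]
    by (cases "m \<le> s") auto
  with s show ?thesis by auto
qed auto

section \<open>The simultaneous orbit construction\<close>

lemma sum_half_powers_le: "(\<Sum>K\<in>{k0..<M}. (1/2::real) ^ K) \<le> 2 * (1/2) ^ k0"
proof -
  have "(\<Sum>K\<in>{k0..<M}. (1/2::real) ^ K) \<le> (\<Sum>K\<in>{k0..M}. (1/2) ^ K)"
    by (rule sum_mono2) auto
  also have "\<dots> \<le> 2 * (1/2) ^ k0"
    by (simp add: sum_gp)
  finally show ?thesis .
qed

locale simultaneous_orbit_construction =
  fixes p W :: real and I :: "nat set"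
    and w :: "nat \<Rightarrow> nat \<Rightarrow> 'a::real_normed_field"
    and y :: "nat \<Rightarrow> nat \<Rightarrow> nat \<Rightarrow> 'a"
  assumes p: "1 \<le> p" and W: "1 \<le> W" and finite_I: "finite I"
    and weights_bounded: "\<And>i \<nu>. i \<in> I \<Longrightarrow> norm (w i \<nu>) \<le> W"
    and weight_prod_large: "\<And>C m. \<exists>s\<ge>m. \<forall>i\<in>I. C \<le> norm (weight_prod (w i) 1 s)"
    and target_support: "\<And>K i j. j = 0 \<or> K < j \<Longrightarrow> y K i j = 0"
begin

definition tol :: "nat \<Rightarrow> real" where
  "tol K = (1/2) ^ K / (real K + 1)"

definition target_bound :: "nat \<Rightarrow> real" where
  "target_bound K = 1 + (\<Sum>i\<in>I. \<Sum>j\<le>K. norm (y K i j))"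

definition pick_end :: "nat \<Rightarrow> nat \<Rightarrow> nat" where
  "pick_end K t = (SOME s. K + t < s \<and>
     (\<forall>i\<in>I. W ^ (K + t) * target_bound K / tol K \<le> norm (weight_prod (w i) 1 s)))"

fun block_end :: "nat \<Rightarrow> nat" where
  "block_end 0 = pick_end 0 0"
| "block_end (Suc K) = pick_end (Suc K) (block_end K)"

definition prev_end :: "nat \<Rightarrow> nat" where
  "prev_end K = (case K of 0 \<Rightarrow> 0 | Suc k \<Rightarrow> block_end k)"

definition block_start :: "nat \<Rightarrow> nat" where
  "block_start K = block_end K - K"

definition block :: "nat \<Rightarrow> nat set" where
  "block K = {block_start K<..block_end K}"

lemma tol_pos: "0 < tol K"
  by (simp add: tol_def)

lemma tol_le_1: "tol K \<le> 1"
proof -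
  have "tol K \<le> (1/2) ^ K / 1"
    unfolding tol_def by (rule divide_left_mono) auto
  also have "\<dots> \<le> 1"
    by (simp add: power_le_one)
  finally show ?thesis .
qed

lemma card_block_tol_le: "real K * tol K \<le> (1/2) ^ K"
proof -
  have "real K * tol K = (1/2) ^ K * (real K / (real K + 1))"
    by (simp add: tol_def)
  also have "\<dots> \<le> (1/2) ^ K * 1"
    by (intro mult_left_mono) auto
  finally show ?thesis by simp
qed

lemma target_le_target_bound: "i \<in> I \<Longrightarrow> norm (y K i j) \<le> target_bound K"
proof (cases "j \<le> K")
  case True
  assume i: "i \<in> I"
  have "norm (y K i j) \<le> (\<Sum>j\<le>K. norm (y K i j))"
    by (rule member_le_sum) (use True in auto)
  also have "\<dots> \<le> (\<Sum>i\<in>I. \<Sum>j\<le>K. norm (y K i j))"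
    by (rule member_le_sum) (use i finite_I in \<open>auto intro: sum_nonneg\<close>)
  finally show ?thesis by (simp add: target_bound_def)
next
  case False
  then show ?thesis by (simp add: target_support target_bound_def sum_nonneg add_nonneg_nonneg)
qed

lemma target_bound_pos: "0 < target_bound K"
  by (simp add: target_bound_def sum_nonneg add_pos_nonneg)

lemma block_end_spec:
  shows "K + prev_end K < block_end K"
    and "i \<in> I \<Longrightarrow> W ^ (K + prev_end K) * target_bound K / tol K
                     \<le> norm (weight_prod (w i) 1 (block_end K))"
proof -
  define P where "P t s \<longleftrightarrow> K + t < s \<and>
      (\<forall>i\<in>I. W ^ (K + t) * target_bound K / tol K \<le> norm (weight_prod (w i) 1 s))" for t s
  have "\<exists>s. P t s" for t
    using weight_prod_large[where C = "W ^ (K + t) * target_bound K / tol K" and m = "Suc (K + t)"]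
    by (auto simp: P_def Suc_le_eq)
  then have "P (prev_end K) (pick_end K (prev_end K))"
    unfolding pick_end_def P_def[symmetric] by (rule someI_ex)
  moreover have "block_end K = pick_end K (prev_end K)"
    by (cases K) (simp_all add: prev_end_def)
  ultimately show "K + prev_end K < block_end K"
    and "i \<in> I \<Longrightarrow> W ^ (K + prev_end K) * target_bound K / tol K
                     \<le> norm (weight_prod (w i) 1 (block_end K))"
    by (auto simp: P_def)
qed

lemma block_end_eq: "block_end K = block_start K + K"
  using block_end_spec(1)[of K] by (simp add: block_start_def)

lemma prev_end_less_block_start: "prev_end K < block_start K"
  using block_end_spec(1)[of K] by (simp add: block_start_def)

lemma strict_mono_block_end: "strict_mono block_end"
proof (rule strict_monoI_Suc)
  fix K
  have "block_end K = prev_end (Suc K)"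
    by (simp add: prev_end_def)
  also have "\<dots> < block_start (Suc K)"
    by (rule prev_end_less_block_start)
  also have "\<dots> \<le> block_end (Suc K)"
    by (simp add: block_end_eq)
  finally show "block_end K < block_end (Suc K)" .
qed

lemma block_end_le_prev_end: "k < K \<Longrightarrow> block_end k \<le> prev_end K"
  using strict_mono_block_end by (cases K) (auto simp: prev_end_def strict_mono_less_eq)

lemma le_block_start: "K \<le> block_start K"
proof (induction K)
  case (Suc K)
  have "block_start K < block_start (Suc K)"
    using block_end_le_prev_end[of K "Suc K"] prev_end_less_block_start[of "Suc K"] block_end_eq[of K]
    by linarith
  with Suc show ?case by linarith
qed simp

lemma block_end_less_block_start: "k < K \<Longrightarrow> block_end k < block_start K"
  using block_end_le_prev_end prev_end_less_block_start le_less_trans by blast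

lemma block_disjoint: "m \<in> block K \<Longrightarrow> m \<in> block K' \<Longrightarrow> K = K'"
  using block_end_less_block_start[of K K'] block_end_less_block_start[of K' K]
  by (cases K K' rule: linorder_cases) (auto simp: block_def)

lemma less_of_mem_block: "m \<in> block K \<Longrightarrow> K < m"
  using le_block_start[of K] by (auto simp: block_def)

lemma card_block: "card (block K) = K"
  by (simp add: block_def block_end_eq)

lemma weight_prod_nonzero:
  assumes "i \<in> I" "1 \<le> a" "a \<le> b" "b \<le> block_end K"
  shows "weight_prod (w i) a b \<noteq> 0"
proof
  assume "weight_prod (w i) a b = 0"
  then have "weight_prod (w i) 1 (block_end K) = 0"
    using weight_prod_split[of 1 a "block_end K" "w i"] weight_prod_split[of a b "block_end K" "w i"] assms
    by simp
  moreover have "0 < W ^ (K + prev_end K) * target_bound K / tol K"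
    using W target_bound_pos tol_pos by simp
  ultimately show False
    using block_end_spec(2)[OF assms(1), of K] by simp
qed

text \<open>\<open>weight_prod (w i) j (j + block_start K - t)\<close> lacks at most \<open>K + prev_end K\<close> of the factors of
  \<open>weight_prod (w i) 1 (block_end K)\<close>, each of norm at most \<open>W\<close>: this is the loss that the
  choice of \<open>pick_end\<close> compensates.\<close>
lemma target_le_tol_weight_prod:
  assumes i: "i \<in> I" and j: "1 \<le> j" "j \<le> K" and t: "t \<le> prev_end K"
  shows "norm (y K i j) \<le> tol K * norm (weight_prod (w i) j (j + block_start K - t))"
proof -
  define b where "b = j + block_start K - t"
  define s where "s = block_end K"
  have "t < block_start K"
    using t prev_end_less_block_start[of K] by linarith
  then have jb: "j \<le> b" and bs: "b \<le> s"
    using j by (auto simp: b_def s_def block_end_eq)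
  have split: "weight_prod (w i) 1 s
      = weight_prod (w i) 1 j * weight_prod (w i) j b * weight_prod (w i) b s"
    using weight_prod_split[of 1 j s "w i"] weight_prod_split[of j b s "w i"] j jb bs by simp
  have "W ^ (K + prev_end K) * target_bound K / tol K \<le> norm (weight_prod (w i) 1 s)"
    unfolding s_def by (rule block_end_spec(2)[OF i])
  also have "\<dots> \<le> W ^ (j - 1) * norm (weight_prod (w i) j b) * W ^ (s - b)"
  proof -
    have "norm (weight_prod (w i) 1 j) \<le> W ^ (j - 1)" "norm (weight_prod (w i) b s) \<le> W ^ (s - b)"
      using weights_bounded[OF i] by (auto intro: norm_weight_prod_le)
    then show ?thesis
      unfolding split norm_mult using W by (intro mult_mono) auto
  qed
  also have "\<dots> = W ^ (j - 1 + (s - b)) * norm (weight_prod (w i) j b)"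
    by (simp add: power_add)
  also have "\<dots> \<le> W ^ (K + prev_end K) * norm (weight_prod (w i) j b)"
    using W j t jb bs by (intro mult_right_mono power_increasing) (auto simp: s_def b_def block_end_eq)
  finally have "target_bound K \<le> tol K * norm (weight_prod (w i) j b)"
    using W tol_pos[of K] by (simp add: field_simps)
  then show ?thesis
    using target_le_target_bound[OF i] b_def order_trans by blast
qed

text \<open>On block \<open>K\<close>, \<open>orbit_vec i\<close> is the \<open>K\<close>-th target pushed forward by \<open>block_start K\<close> places:
  the entry \<open>y\<^sub>j / (w\<^sub>j\<^sub>+\<^sub>1 \<cdots> w\<^sub>m)\<close> at \<open>m = block_start K + j\<close> is sent back to \<open>y\<^sub>j\<close> by
  \<open>wshift (w i) ^^ block_start K\<close>.\<close>
definition orbit_vec :: "nat \<Rightarrow> nat \<Rightarrow> 'a" where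
  "orbit_vec i m = (\<Sum>K<m. if m \<in> block K
     then y K i (m - block_start K) / weight_prod (w i) (m - block_start K) m else 0)"

lemma orbit_vec_0 [simp]: "orbit_vec i 0 = 0"
  by (simp add: orbit_vec_def)

lemma orbit_vec_outside_blocks: "(\<And>K. m \<notin> block K) \<Longrightarrow> orbit_vec i m = 0"
  by (simp add: orbit_vec_def)

lemma orbit_vec_block:
  assumes m: "m \<in> block K"
  shows "orbit_vec i m = y K i (m - block_start K) / weight_prod (w i) (m - block_start K) m"
proof -
  have "orbit_vec i m = (\<Sum>K'<m. if K' = K
          then y K i (m - block_start K) / weight_prod (w i) (m - block_start K) m else 0)"
    unfolding orbit_vec_def by (rule sum.cong) (use m block_disjoint in auto)
  then show ?thesis
    using less_of_mem_block[OF m] by simp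
qed

lemma shift_orbit_vec_block:
  assumes i: "i \<in> I" and m: "m \<in> block K" and t: "t \<le> block_start K"
  shows "(wshift (w i) ^^ t) (orbit_vec i) (m - t)
           = y K i (m - block_start K) / weight_prod (w i) (m - block_start K) (m - t)"
proof -
  define j where "j = m - block_start K"
  have j: "1 \<le> j" "j \<le> m - t" "m \<le> block_end K"
    using m t by (auto simp: j_def block_def)
  have "weight_prod (w i) j m = weight_prod (w i) j (m - t) * weight_prod (w i) (m - t) m"
    using j by (intro weight_prod_split) auto
  moreover have "weight_prod (w i) (m - t) m \<noteq> 0"
    using j by (intro weight_prod_nonzero[OF i, of _ _ K]) auto
  moreover have "m - t + t = m"
    using j by simp
  ultimately show ?thesis
    using j by (simp add: wshift_funpow orbit_vec_block[OF m] j_def[symmetric])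
qed

lemma norm_shift_orbit_vec_block_le:
  assumes i: "i \<in> I" and m: "m \<in> block K" and t: "t \<le> prev_end K"
  shows "norm ((wshift (w i) ^^ t) (orbit_vec i) (m - t)) powr p \<le> tol K"
proof -
  define j where "j = m - block_start K"
  have t_less: "t < block_start K"
    using t prev_end_less_block_start[of K] by linarith
  have j: "1 \<le> j" "j \<le> K" "j \<le> m - t" "m - t = j + block_start K - t" "m \<le> block_end K"
    using m t_less by (auto simp: j_def block_def block_end_eq)
  have "weight_prod (w i) j (m - t) \<noteq> 0"
    using j by (intro weight_prod_nonzero[OF i, of _ _ K]) auto
  moreover have "norm (y K i j) \<le> tol K * norm (weight_prod (w i) j (m - t))"
    using target_le_tol_weight_prod[OF i j(1,2) t] j(4) by simp
  ultimately have "norm ((wshift (w i) ^^ t) (orbit_vec i) (m - t)) \<le> tol K"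
    using shift_orbit_vec_block[OF i m less_imp_le[OF t_less]]
    by (simp add: j_def[symmetric] norm_divide divide_le_eq)
  then show ?thesis
    using tol_le_1[of K] p by (intro order_trans[OF powr_mono2 powr_le_one_le[OF tol_pos]]) auto
qed

text \<open>By disjointness of the blocks the sum has at most one term; writing it as a sum turns the
  estimate \<open>sum_coord_bound_le\<close> into an exchange of two finite sums.\<close>
definition coord_bound :: "nat \<Rightarrow> nat \<Rightarrow> real" where
  "coord_bound k m = (\<Sum>K\<in>{K. k \<le> K \<and> m \<in> block K}. tol K)"

lemma coord_bound_nonneg: "0 \<le> coord_bound k m"
  unfolding coord_bound_def by (intro sum_nonneg) (simp add: less_imp_le[OF tol_pos])

lemma coord_bound_block: "m \<in> block K \<Longrightarrow> k \<le> K \<Longrightarrow> coord_bound k m = tol K"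
proof -
  assume "m \<in> block K" "k \<le> K"
  then have "{K. k \<le> K \<and> m \<in> block K} = {K}"
    using block_disjoint by blast
  then show ?thesis by (simp add: coord_bound_def)
qed

lemma sum_coord_bound_le: "(\<Sum>m<M. coord_bound k m) \<le> 2 * (1/2) ^ k"
proof -
  have "(\<Sum>m<M. coord_bound k m) = (\<Sum>m<M. \<Sum>K\<in>{K. K \<in> {..<M} \<and> k \<le> K \<and> m \<in> block K}. tol K)"
    unfolding coord_bound_def
    by (intro sum.cong refl arg_cong[where f = "\<lambda>A. sum tol A"]) (auto dest: less_of_mem_block)
  also have "\<dots> = (\<Sum>K<M. \<Sum>m\<in>{m. m \<in> {..<M} \<and> k \<le> K \<and> m \<in> block K}. tol K)"
    by (rule sum.swap_restrict) auto
  also have "\<dots> \<le> (\<Sum>K<M. if k \<le> K then real K * tol K else 0)"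
  proof (rule sum_mono)
    fix K
    have "card {m. m \<in> {..<M} \<and> k \<le> K \<and> m \<in> block K} \<le> card (block K)"
      by (rule card_mono) (auto simp: block_def)
    then show "(\<Sum>m\<in>{m. m \<in> {..<M} \<and> k \<le> K \<and> m \<in> block K}. tol K)
                 \<le> (if k \<le> K then real K * tol K else 0)"
      using tol_pos[of K] by (auto simp: card_block intro: mult_right_mono)
  qed
  also have "\<dots> = (\<Sum>K\<in>{k..<M}. real K * tol K)"
    by (simp add: sum.If_cases lessThan_def atLeastLessThan_def Int_def conj_commute)
  also have "\<dots> \<le> (\<Sum>K\<in>{k..<M}. (1/2) ^ K)"
    by (intro sum_mono card_block_tol_le)
  also have "\<dots> \<le> 2 * (1/2) ^ k"
    by (rule sum_half_powers_le)
  finally show ?thesis .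
qed

lemma norm_orbit_vec_powr_le: "i \<in> I \<Longrightarrow> norm (orbit_vec i m) powr p \<le> coord_bound 0 m"
  using norm_shift_orbit_vec_block_le[of i m _ 0] coord_bound_block[of m _ 0]
    orbit_vec_outside_blocks[of m i] coord_bound_nonneg[of 0 m]
  by (cases "\<exists>K. m \<in> block K") auto

lemma orbit_vec_in_lp_space: "i \<in> I \<Longrightarrow> orbit_vec i \<in> lp_space p"
proof -
  assume i: "i \<in> I"
  have "(\<Sum>m<M. norm (orbit_vec i m) powr p) \<le> 2" for M
  proof -
    have "(\<Sum>m<M. norm (orbit_vec i m) powr p) \<le> (\<Sum>m<M. coord_bound 0 m)"
      by (intro sum_mono norm_orbit_vec_powr_le[OF i])
    also have "\<dots> \<le> 2"
      using sum_coord_bound_le[where M = M and k = 0] by simp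
    finally show ?thesis .
  qed
  then have "summable (\<lambda>m. norm (orbit_vec i m) powr p)"
    by (intro summableI_nonneg_bounded) auto
  then show ?thesis by (simp add: lp_space_def)
qed

lemma orbit_vec_error_le:
  assumes i: "i \<in> I"
  shows "norm ((wshift (w i) ^^ block_start K) (orbit_vec i) j - y K i j) powr p
           \<le> coord_bound (Suc K) (j + block_start K)"
proof -
  let ?x = "(wshift (w i) ^^ block_start K) (orbit_vec i)" and ?m = "j + block_start K"
  consider "j = 0" | "1 \<le> j" "j \<le> K" | "K < j" by linarith
  then show ?thesis
  proof cases
    case 1
    then show ?thesis
      using p by (simp add: wshift_funpow target_support coord_bound_nonneg)
  next
    case 2
    then have "?m \<in> block K"
      by (simp add: block_def block_end_eq)
    from shift_orbit_vec_block[OF i this order_refl] have "?x j = y K i j"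
      by simp
    then show ?thesis
      using p by (simp add: coord_bound_nonneg)
  next
    case 3
    show ?thesis
    proof (cases "\<exists>K'. ?m \<in> block K'")
      case True
      then obtain K' where K': "?m \<in> block K'" ..
      have "K < K'"
        using 3 K' block_end_less_block_start[of K' K]
        by (cases K K' rule: linorder_cases) (auto simp: block_def block_end_eq)
      then have "norm (?x (?m - block_start K)) powr p \<le> tol K'"
        by (intro norm_shift_orbit_vec_block_le[OF i K'] order_trans[OF _ block_end_le_prev_end])
           (auto simp: block_end_eq)
      then show ?thesis
        using 3 \<open>K < K'\<close> by (simp add: target_support coord_bound_block[OF K'])
    next
      case False
      then show ?thesis
        using 3 p by (simp add: wshift_funpow orbit_vec_outside_blocks target_support coord_bound_nonneg)
    qed
  qed
qed

lemma orbit_vec_approximates_targets: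
  assumes i: "i \<in> I"
  shows "summable (\<lambda>j. norm ((wshift (w i) ^^ block_start K) (orbit_vec i) j - y K i j) powr p)"
    and "(\<Sum>j. norm ((wshift (w i) ^^ block_start K) (orbit_vec i) j - y K i j) powr p) \<le> (1/2) ^ K"
proof -
  let ?e = "\<lambda>j. norm ((wshift (w i) ^^ block_start K) (orbit_vec i) j - y K i j) powr p"
  have partial: "(\<Sum>j<M. ?e j) \<le> (1/2) ^ K" for M
  proof -
    have "(\<Sum>j<M. ?e j) \<le> (\<Sum>j<M. coord_bound (Suc K) (j + block_start K))"
      by (intro sum_mono orbit_vec_error_le[OF i])
    also have "\<dots> = (\<Sum>m\<in>{block_start K..<M + block_start K}. coord_bound (Suc K) m)"
      using sum.shift_bounds_nat_ivl[of "coord_bound (Suc K)" 0 "block_start K" M]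
      by (simp add: atLeast0LessThan)
    also have "\<dots> \<le> (\<Sum>m<M + block_start K. coord_bound (Suc K) m)"
      by (intro sum_mono2) (auto simp: coord_bound_nonneg)
    also have "\<dots> \<le> (1/2) ^ K"
      using sum_coord_bound_le[where M = "M + block_start K" and k = "Suc K"] by simp
    finally show ?thesis .
  qed
  show "summable ?e"
    by (rule summableI_nonneg_bounded[OF _ partial]) simp
  then show "(\<Sum>j. ?e j) \<le> (1/2) ^ K"
    by (rule suminf_le_const[OF _ partial])
qed

lemma lp_dsum_hypercyclic_if_targets_dense:
  assumes targets_dense: "\<And>z \<eta> k. \<forall>i\<in>I. z i \<in> lp_space p \<Longrightarrow> 0 < \<eta> \<Longrightarrow>
           \<exists>K\<ge>k. \<forall>i\<in>I. lp_powsum_less p (y K i) (z i) \<eta>"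
  shows "lp_dsum_hypercyclic p I (\<lambda>i. wshift (w i))"
  unfolding lp_dsum_hypercyclic_def
proof (intro exI[of _ orbit_vec] conjI allI impI ballI orbit_vec_in_lp_space)
  fix z :: "nat \<Rightarrow> nat \<Rightarrow> 'a" and \<epsilon> :: real
  assume z: "\<forall>i\<in>I. z i \<in> lp_space p" and "0 < \<epsilon>"
  have "0 < p"
    using p by simp
  define \<eta> where "\<eta> = \<epsilon> powr p / 2 powr (p + 1)"
  have "0 < \<eta>"
    using \<open>0 < \<epsilon>\<close> by (simp add: \<eta>_def)
  obtain k where k: "(1/2::real) ^ k < \<eta>"
    using real_arch_pow_inv[OF \<open>0 < \<eta>\<close>, of "1/2"] by auto
  obtain K where "k \<le> K" and close: "\<forall>i\<in>I. lp_powsum_less p (y K i) (z i) \<eta>"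
    using targets_dense[OF z \<open>0 < \<eta>\<close>, of k] by auto
  have "(1/2::real) ^ K \<le> (1/2) ^ k"
    by (rule power_decreasing[OF \<open>k \<le> K\<close>]) auto
  with k have "(1/2::real) ^ K < \<eta>"
    by linarith
  show "\<exists>n. \<forall>i\<in>I. lp_dist p (((\<lambda>i. wshift (w i)) i ^^ n) (orbit_vec i)) (z i) < \<epsilon>"
  proof (intro exI[of _ "block_start K"] ballI)
    fix i assume i: "i \<in> I"
    have "lp_powsum_less p ((wshift (w i) ^^ block_start K) (orbit_vec i)) (y K i) \<eta>"
      using orbit_vec_approximates_targets[OF i, of K] \<open>(1/2) ^ K < \<eta>\<close>
      unfolding lp_powsum_less_def by linarith
    moreover have "lp_powsum_less p (y K i) (z i) \<eta>"
      using close i by blast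
    ultimately show "lp_dist p (((\<lambda>i. wshift (w i)) i ^^ block_start K) (orbit_vec i)) (z i) < \<epsilon>"
      unfolding \<eta>_def by (simp add: lp_dist_less_if_lp_powsum_less[OF \<open>0 < p\<close> \<open>0 < \<epsilon>\<close>])
  qed
qed

end

section \<open>Dense sequences of finitely supported targets\<close>

lemma suminf_less_of_head_tail:
  fixes g :: "nat \<Rightarrow> real"
  assumes "summable g" "\<And>j. j \<le> L \<Longrightarrow> g j \<le> \<delta>" "(\<Sum>m. g (m + Suc L)) < \<epsilon>"
  shows "suminf g < real (Suc L) * \<delta> + \<epsilon>"
proof -
  have "suminf g = (\<Sum>m. g (m + Suc L)) + (\<Sum>j<Suc L. g j)"
    by (rule suminf_split_initial_segment[OF assms(1)])
  also have "(\<Sum>j<Suc L. g j) \<le> (\<Sum>j<Suc L. \<delta>)"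
    using assms(2) by (intro sum_mono) auto
  finally show ?thesis
    using assms(3) by simp
qed

lemma dense_approximating_function:
  fixes u :: "'b \<Rightarrow> 'a::metric_space"
  assumes "\<And>X. open X \<Longrightarrow> X \<noteq> {} \<Longrightarrow> \<exists>d\<in>D. d \<in> X" "0 < r"
  shows "\<exists>d. \<forall>x. d x \<in> D \<and> dist (u x) (d x) < r"
proof -
  have "\<forall>x. \<exists>d. d \<in> D \<and> dist (u x) d < r"
    using assms by (metis centre_in_ball empty_iff mem_ball open_ball)
  then show ?thesis
    by (rule choice)
qed

lemma lp_tails_uniformly_small:
  fixes y :: "nat \<Rightarrow> nat \<Rightarrow> 'a::real_normed_vector"
  assumes "finite I" "\<forall>i\<in>I. y i \<in> lp_space p" "0 < \<epsilon>"
  obtains N where "\<And>L i. N \<le> L \<Longrightarrow> i \<in> I \<Longrightarrow> (\<Sum>m. norm (y i (m + L)) powr p) < \<epsilon>"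
proof -
  have "\<forall>i\<in>I. \<forall>\<^sub>F L in sequentially. (\<Sum>m. norm (y i (m + L)) powr p) < \<epsilon>"
  proof
    fix i assume "i \<in> I"
    then have "summable (\<lambda>m. norm (y i m) powr p)"
      using assms(2) by (simp add: lp_space_def)
    then obtain N where "\<forall>L\<ge>N. norm (\<Sum>m. norm (y i (m + L)) powr p) < \<epsilon>"
      using suminf_exist_split[OF assms(3)] by blast
    then have "\<forall>L\<ge>N. (\<Sum>m. norm (y i (m + L)) powr p) < \<epsilon>"
      by (auto simp: abs_less_iff)
    then show "\<forall>\<^sub>F L in sequentially. (\<Sum>m. norm (y i (m + L)) powr p) < \<epsilon>"
      unfolding eventually_sequentially by blast
  qed
  then have "\<forall>\<^sub>F L in sequentially. \<forall>i\<in>I. (\<Sum>m. norm (y i (m + L)) powr p) < \<epsilon>"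
    by (rule eventually_ball_finite[OF assms(1)])
  then show ?thesis
    using that unfolding eventually_sequentially by blast
qed

definition box_target :: "nat \<Rightarrow> (nat \<times> nat \<Rightarrow> 'a) \<Rightarrow> nat \<Rightarrow> nat \<Rightarrow> 'a::zero" where
  "box_target L f i j = (if (i, j) \<in> {..L} \<times> {1..L} then f (i, j) else 0)"

lemma approx_by_box_target:
  fixes y :: "nat \<Rightarrow> nat \<Rightarrow> 'a::real_normed_vector"
  assumes p: "0 < p" and finite_I: "finite I" and y_lp: "\<forall>i\<in>I. y i \<in> lp_space p"
    and \<eta>: "0 < \<eta>" and D: "\<And>X. open X \<Longrightarrow> X \<noteq> {} \<Longrightarrow> \<exists>d\<in>D. d \<in> X"
  shows "\<exists>L. \<exists>f \<in> {..L} \<times> {1..L} \<rightarrow>\<^sub>E D. \<forall>i\<in>I. lp_powsum_less p (box_target L f i) (y i) \<eta>"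
proof -
  have "0 < \<eta> / 2"
    using \<eta> by simp
  then obtain N
    where tail: "\<And>L i. N \<le> L \<Longrightarrow> i \<in> I \<Longrightarrow> (\<Sum>m. norm (y i (m + L)) powr p) < \<eta> / 2"
    using lp_tails_uniformly_small[OF finite_I y_lp] by blast
  obtain M where "I \<subseteq> {..<M}"
    using finite_nat_bounded[OF finite_I] by blast
  define L where "L = max N M"
  have L: "N \<le> L" "I \<subseteq> {..L}"
    using \<open>I \<subseteq> {..<M}\<close> by (auto simp: L_def)
  define r where "r = (\<eta> / (2 * (real L + 1))) powr (1 / p)"
  have "0 < r"
    using \<eta> by (simp add: r_def)
  obtain d where d: "\<forall>ij. d ij \<in> D \<and> dist (case_prod y ij) (d ij) < r"
    using dense_approximating_function[OF D \<open>0 < r\<close>, of "case_prod y"] by blast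
  define f where "f = restrict d ({..L} \<times> {1..L})"
  have f: "f \<in> {..L} \<times> {1..L} \<rightarrow>\<^sub>E D"
    using d by (auto simp: f_def)
  have approx: "lp_powsum_less p (box_target L f i) (y i) \<eta>" if i: "i \<in> I" for i
  proof -
    define g where "g j = norm (box_target L f i j - y i j) powr p" for j
    have tail_eq: "g (Suc (m + L)) = norm (y i (Suc (m + L))) powr p" for m
      by (simp add: g_def box_target_def)
    have "summable (\<lambda>m. norm (y i (m + Suc L)) powr p)"
      using y_lp[rule_format, OF i] summable_iff_shift[of "\<lambda>m. norm (y i m) powr p" "Suc L"]
      by (simp add: lp_space_def)
    then have "summable g"
      using summable_iff_shift[of g "Suc L"] by (simp add: tail_eq)
    moreover have "g j \<le> \<eta> / (2 * (real L + 1))" if "j \<le> L" for j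
    proof (cases "j = 0")
      case True
      then show ?thesis using y_lp[rule_format, OF i] \<eta> by (simp add: g_def box_target_def lp_space_def)
    next
      case False
      moreover have "dist (y i j) (d (i, j)) < r"
        using d by simp
      ultimately have "norm (box_target L f i j - y i j) \<le> r"
        using i L(2) \<open>j \<le> L\<close> by (auto simp: box_target_def f_def dist_norm norm_minus_commute)
      then have "g j \<le> r powr p"
        unfolding g_def using p by (intro powr_mono2) auto
      also have "\<dots> = \<eta> / (2 * (real L + 1))"
        using p \<eta> by (simp add: r_def powr_powr)
      finally show ?thesis .
    qed
    moreover have "(\<Sum>m. g (m + Suc L)) < \<eta> / 2"
      using tail[OF _ i, of "Suc L"] L(1) by (simp add: tail_eq)
    ultimately have "suminf g < real (Suc L) * (\<eta> / (2 * (real L + 1))) + \<eta> / 2"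
      by (rule suminf_less_of_head_tail)
    also have "\<dots> = \<eta>"
      by (simp add: field_simps)
    finally show ?thesis
      using \<open>summable g\<close> unfolding lp_powsum_less_def g_def by simp
  qed
  show ?thesis
    using f approx by blast
qed

lemma dense_target_sequence:
  fixes p :: real and I :: "nat set"
  assumes "0 < p" "finite I"
  obtains y :: "nat \<Rightarrow> nat \<Rightarrow> nat \<Rightarrow> 'a::{real_normed_vector, second_countable_topology}"
  where "\<And>K i j. j = 0 \<or> K < j \<Longrightarrow> y K i j = 0"
    and "\<And>z \<eta> k. \<forall>i\<in>I. z i \<in> lp_space p \<Longrightarrow> 0 < \<eta> \<Longrightarrow>
           \<exists>K\<ge>k. \<forall>i\<in>I. lp_powsum_less p (y K i) (z i) \<eta>"
proof -
  obtain D :: "'a set" where "countable D" and D: "\<And>X. open X \<Longrightarrow> X \<noteq> {} \<Longrightarrow> \<exists>d\<in>D. d \<in> X"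
    by (metis countable_dense_setE)
  define codes where "codes = (SIGMA L::nat:UNIV. {..L} \<times> {1..L} \<rightarrow>\<^sub>E D)"
  have "countable codes"
    unfolding codes_def using \<open>countable D\<close> by (intro countable_SIGMA countable_PiE) auto
  define y where "y K i j = (if j \<le> K
      then case_prod box_target (from_nat_into codes (fst (prod_decode K))) i j else 0)" for K i j
  show ?thesis
  proof (rule that)
    show "y K i j = 0" if "j = 0 \<or> K < j" for K i j
      using that by (auto simp: y_def box_target_def split: prod.split)
  next
    fix z :: "nat \<Rightarrow> nat \<Rightarrow> 'a" and \<eta> :: real and k :: nat
    assume z: "\<forall>i\<in>I. z i \<in> lp_space p" and "0 < \<eta>"
    obtain L f where f: "f \<in> {..L} \<times> {1..L} \<rightarrow>\<^sub>E D"
      and close: "\<forall>i\<in>I. lp_powsum_less p (box_target L f i) (z i) \<eta>"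
      using approx_by_box_target[OF assms z \<open>0 < \<eta>\<close> D] by blast
    have "(L, f) \<in> codes"
      using f by (simp add: codes_def)
    then obtain q where q: "from_nat_into codes q = (L, f)"
      using from_nat_into_surj[OF \<open>countable codes\<close>] by blast
    define K where "K = prod_encode (q, max k L)"
    have "k \<le> K" "L \<le> K"
      using le_prod_encode_2[where a = q and b = "max k L"] by (auto simp: K_def)
    have "from_nat_into codes (fst (prod_decode K)) = (L, f)"
      by (simp add: K_def q)
    then have "y K = (\<lambda>i. box_target L f i)"
      using \<open>L \<le> K\<close> by (intro ext) (auto simp: y_def box_target_def)
    then show "\<exists>K\<ge>k. \<forall>i\<in>I. lp_powsum_less p (y K i) (z i) \<eta>"
      using \<open>k \<le> K\<close> close by (intro exI[of _ K]) simp
  qed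
qed

section \<open>Direct sums of weighted backward shifts\<close>

lemma uniform_bound_of_bounded_ranges:
  fixes w :: "nat \<Rightarrow> nat \<Rightarrow> 'a::real_normed_vector"
  assumes "finite I" "\<forall>i\<in>I. bounded (range (w i))"
  shows "\<exists>W\<ge>1. \<forall>i\<in>I. \<forall>\<nu>. norm (w i \<nu>) \<le> W"
proof -
  have "bounded (\<Union>i\<in>I. range (w i))"
    using assms by (intro bounded_UN) auto
  then obtain W0 where W0: "\<And>z. z \<in> (\<Union>i\<in>I. range (w i)) \<Longrightarrow> norm z \<le> W0"
    unfolding bounded_iff by blast
  have "norm (w i \<nu>) \<le> max W0 1" if "i \<in> I" for i \<nu>
    using W0[of "w i \<nu>"] that by fastforce
  then show ?thesis
    by (intro exI[of _ "max W0 1"]) auto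
qed

theorem wshift_direct_sum_hypercyclic:
  fixes w :: "nat \<Rightarrow> nat \<Rightarrow> 'a::{real_normed_field, second_countable_topology}"
  assumes p: "1 \<le> p" and finite_I: "finite I" and bounded_weights: "\<forall>i\<in>I. bounded (range (w i))"
    and hyp: "lp_s_hypercyclic p I (\<lambda>i. wshift (w i))"
  shows "lp_dsum_hypercyclic p I (\<lambda>i. wshift (w i))"
proof -
  obtain W where W: "1 \<le> W" and weights_bounded: "\<forall>i\<in>I. \<forall>\<nu>. norm (w i \<nu>) \<le> W"
    using uniform_bound_of_bounded_ranges[OF finite_I bounded_weights] by auto
  have "0 < p"
    using p by simp
  obtain y :: "nat \<Rightarrow> nat \<Rightarrow> nat \<Rightarrow> 'a" where y_support: "\<And>K i j. j = 0 \<or> K < j \<Longrightarrow> y K i j = 0"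
    and y_dense: "\<And>z \<eta> k. \<forall>i\<in>I. z i \<in> lp_space p \<Longrightarrow> 0 < \<eta> \<Longrightarrow>
           \<exists>K\<ge>k. \<forall>i\<in>I. lp_powsum_less p (y K i) (z i) \<eta>"
    by (fact dense_target_sequence[OF \<open>0 < p\<close> finite_I])
  have weight_prod_large: "\<exists>s\<ge>m. \<forall>i\<in>I. C \<le> norm (weight_prod (w i) 1 s)" for C m
    using weights_bounded
    by (intro s_hypercyclic_weight_prod_frequently_large[OF \<open>0 < p\<close> W _ hyp]) auto
  interpret simultaneous_orbit_construction p W I w y
    by unfold_locales (use weight_prod_large in \<open>simp_all add: p W finite_I weights_bounded y_support\<close>)
  show ?thesis
    by (rule lp_dsum_hypercyclic_if_targets_dense) (fact y_dense)
qed

theorem corollary3p8: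
  fixes p :: real and N :: nat
    and wr :: "nat \<Rightarrow> nat \<Rightarrow> real" and wc :: "nat \<Rightarrow> nat \<Rightarrow> complex"
  assumes "1 \<le> p" and "2 \<le> N"
  shows "((\<forall>i\<in>{1..N}. bounded (range (wr i))) \<and>
           lp_s_hypercyclic p {1..N} (\<lambda>i. wshift (wr i))
           \<longrightarrow> lp_dsum_hypercyclic p {1..N} (\<lambda>i. wshift (wr i)))
       \<and> ((\<forall>i\<in>{1..N}. bounded (range (wc i))) \<and>
           lp_s_hypercyclic p {1..N} (\<lambda>i. wshift (wc i))
           \<longrightarrow> lp_dsum_hypercyclic p {1..N} (\<lambda>i. wshift (wc i)))"
  using wshift_direct_sum_hypercyclic[where w = wr, OF assms(1) finite_atLeastAtMost]
    wshift_direct_sum_hypercyclic[where w = wc, OF assms(1) finite_atLeastAtMost]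
  by blast

end
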